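(* Let $E$ be a Boolean algebra of propositions, $E_0=E\setminus\{0\}$, let $T$ be a commutative algebra with identity over $\mathbb{R}$ containing $\mathbb{R}$ (an algebra of unknown real numbers), and let $PV:T\times E_0\to\mathbb{R}$ be a plausible value function satisfying: (a) for all $a,b\in\mathbb{R}$, $X\in T$, $C\in E_0$: $PV(aX+b|C)=aPV(X|C)+b$; (b) for each fixed $Y\in T$ and $A\in E_0$, the value $PV(X+Y|A)$ depends only on $PV(X|A)$ (i.e. $PV(X|A)=PV(X'|A)$ implies $PV(X+Y|A)=PV(X'+Y|A)$). Then for all $X,Y\in T$ and $A\in E_0$, $$PV(X+Y|A)=PV(X|A)+PV(Y|A).$$ *)

theory Defs
  imports Complex_Main
begin

end

theory Submission
  imports Defs
begin

theorem mainTheorem4: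
  fixes PV :: "'t::{real_algebra_1, comm_ring_1} \<Rightarrow> 'e::boolean_algebra \<Rightarrow> real"
  assumes lin: "\<And>(a::real) (b::real) X C. C \<noteq> bot \<Longrightarrow>
                  PV (a *\<^sub>R X + of_real b) C = a * PV X C + b"
      and dep: "\<And>X X' Y A. A \<noteq> bot \<Longrightarrow> PV X A = PV X' A \<Longrightarrow>
                  PV (X + Y) A = PV (X' + Y) A"
      and A: "A \<noteq> bot"
  shows "PV (X + Y) A = PV X A + PV Y A"
proof -
  define c where "c = PV X A"
  have PV_const: "PV (of_real c) A = c"
    using lin[OF A, of 0 X c] by simp
  have "PV (X + Y) A = PV (of_real c + Y) A"
    using dep[OF A, of X "of_real c" Y] PV_const by (simp add: c_def)
  also have "\<dots> = PV (1 *\<^sub>R Y + of_real c) A"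
    by (simp add: add.commute)
  also have "\<dots> = PV Y A + c"
    using lin[OF A, of 1 Y c] by simp
  finally show ?thesis
    by (simp add: c_def)
qed

end
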